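(* Let $L$ be a finite-dimensional Lie algebra over a field $F$ and let $A_1/B_1$, $A_2/B_2$ be chief factors of $L$. Then (i) if $A_1/B_1$ and $A_2/B_2$ are $L$-isomorphic, then $C_L(A_1/B_1) = C_L(A_2/B_2)$; (ii) if $A_1/B_1$ and $A_2/B_2$ are non-abelian, then they are $L$-isomorphic if and only if $C_L(A_1/B_1) = C_L(A_2/B_2)$.
   Context: A chief factor of $L$ is a quotient $A/B$ of ideals $B \subsetneq A$ of $L$ with no ideal of $L$ strictly between $B$ and $A$. Two chief factors are $L$-isomorphic if they are isomorphic as $L$-modules (under the induced adjoint action). The centraliser of a chief factor is $C_L(A/B) = \{x \in L : [x,A] \subseteq B\}$. *)

theory Defs
  imports Main "HOL.Vector_Spaces"
begin

definition lie_algebra :: "('k::field \<Rightarrow> 'v::ab_group_add \<Rightarrow> 'v) \<Rightarrow> ('v \<Rightarrow> 'v \<Rightarrow> 'v) \<Rightarrow> bool" where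
  "lie_algebra scale br \<longleftrightarrow> vector_space scale \<and>
     (\<forall>x y z. br (x + y) z = br x z + br y z) \<and>
     (\<forall>x y z. br x (y + z) = br x y + br x z) \<and>
     (\<forall>c x y. br (scale c x) y = scale c (br x y)) \<and>
     (\<forall>c x y. br x (scale c y) = scale c (br x y)) \<and>
     (\<forall>x. br x x = 0) \<and>
     (\<forall>x y z. br x (br y z) + br y (br z x) + br z (br x y) = 0)"

definition finite_dimensional :: "('k::field \<Rightarrow> 'v::ab_group_add \<Rightarrow> 'v) \<Rightarrow> bool" where
  "finite_dimensional scale \<longleftrightarrow> (\<exists>S. finite S \<and> module.span scale S = UNIV)"

definition lie_ideal :: "('k::field \<Rightarrow> 'v::ab_group_add \<Rightarrow> 'v) \<Rightarrow> ('v \<Rightarrow> 'v \<Rightarrow> 'v) \<Rightarrow> 'v set \<Rightarrow> bool" where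
  "lie_ideal scale br I \<longleftrightarrow> module.subspace scale I \<and> (\<forall>x a. a \<in> I \<longrightarrow> br x a \<in> I)"

definition chief_factor :: "('k::field \<Rightarrow> 'v::ab_group_add \<Rightarrow> 'v) \<Rightarrow> ('v \<Rightarrow> 'v \<Rightarrow> 'v) \<Rightarrow> 'v set \<Rightarrow> 'v set \<Rightarrow> bool" where
  "chief_factor scale br A B \<longleftrightarrow> lie_ideal scale br A \<and> lie_ideal scale br B \<and> B \<subset> A \<and>
     \<not> (\<exists>I. lie_ideal scale br I \<and> B \<subset> I \<and> I \<subset> A)"

definition centraliser :: "('v \<Rightarrow> 'v \<Rightarrow> 'v) \<Rightarrow> 'v set \<Rightarrow> 'v set \<Rightarrow> 'v set" where
  "centraliser br A B = {x. \<forall>a\<in>A. br x a \<in> B}"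

definition abelian_factor :: "('v \<Rightarrow> 'v \<Rightarrow> 'v) \<Rightarrow> 'v set \<Rightarrow> 'v set \<Rightarrow> bool" where
  "abelian_factor br A B \<longleftrightarrow> (\<forall>a\<in>A. \<forall>b\<in>A. br a b \<in> B)"

definition coset :: "'v::ab_group_add \<Rightarrow> 'v set \<Rightarrow> 'v set" where
  "coset a B = (\<lambda>b. a + b) ` B"

definition quot :: "'v::ab_group_add set \<Rightarrow> 'v set \<Rightarrow> 'v set set" where
  "quot A B = {coset a B | a. a \<in> A}"

text \<open>L-isomorphism of factors A1/B1 and A2/B2: a bijection of the quotients which is
linear and commutes with the induced adjoint action x.(a+B) = [x,a]+B.\<close>
definition L_isomorphic :: "('k::field \<Rightarrow> 'v::ab_group_add \<Rightarrow> 'v) \<Rightarrow> ('v \<Rightarrow> 'v \<Rightarrow> 'v) \<Rightarrow>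
    'v set \<Rightarrow> 'v set \<Rightarrow> 'v set \<Rightarrow> 'v set \<Rightarrow> bool" where
  "L_isomorphic scale br A1 B1 A2 B2 \<longleftrightarrow>
    (\<exists>f. bij_betw f (quot A1 B1) (quot A2 B2) \<and>
      (\<forall>a\<in>A1. \<forall>b\<in>A1. \<forall>a'\<in>A2. \<forall>b'\<in>A2.
          f (coset a B1) = coset a' B2 \<and> f (coset b B1) = coset b' B2 \<longrightarrow>
          f (coset (a + b) B1) = coset (a' + b') B2) \<and>
      (\<forall>c. \<forall>a\<in>A1. \<forall>a'\<in>A2. f (coset a B1) = coset a' B2 \<longrightarrow>
          f (coset (scale c a) B1) = coset (scale c a') B2) \<and>
      (\<forall>x. \<forall>a\<in>A1. \<forall>a'\<in>A2. f (coset a B1) = coset a' B2 \<longrightarrow>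
          f (coset (br x a) B1) = coset (br x a') B2))"

end

theory Submission
  imports Defs "HOL-Library.Set_Algebras"
begin

(*
  (i) An isomorphism of L-modules A1/B1 \<cong> A2/B2 maps the zero coset to the zero coset and
  is injective, so an element of L kills A1/B1 exactly when it kills A2/B2.

  (ii) If A/B is non-abelian, A \<inter> C_L(A/B) is an ideal between B and A other than A, hence
  it is B. Now let C = C_L(A1/B1) = C_L(A2/B2). The ideal A1 \<inter> (A2 + C) lies between B1
  and A1; it is not B1, since then [A2, A1] \<subseteq> B1 would put A2 inside C, making A2/B2
  abelian. Hence A1 \<subseteq> A2 + C and symmetrically, so A1 + C = A2 + C, and by the second
  isomorphism theorem both factors are isomorphic to (A1 + C)/C, via a + B1 \<mapsto> a' + B2
  whenever a - a' \<in> C.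
*)

lemma mem_coset: "y \<in> coset a B \<longleftrightarrow> y - a \<in> B"
proof -
  have "y \<in> coset a B \<longleftrightarrow> (\<exists>b\<in>B. y = a + b)"
    unfolding coset_def by blast
  also have "\<dots> \<longleftrightarrow> y - a \<in> B"
    by (metis add_diff_cancel_left' diff_add_cancel add.commute)
  finally show ?thesis .
qed

lemma coset_in_quot: "a \<in> A \<Longrightarrow> coset a B \<in> quot A B"
  unfolding quot_def by blast

locale lie_alg =
  fixes scale :: "'k::field \<Rightarrow> 'v::ab_group_add \<Rightarrow> 'v"
    and br :: "'v \<Rightarrow> 'v \<Rightarrow> 'v"
  assumes lie_algebra: "lie_algebra scale br"
begin

sublocale vs: vector_space scale
  using lie_algebra by (simp add: lie_algebra_def)

lemma
  shows bracket_add_left: "br (x + y) z = br x z + br y z"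
    and bracket_add_right: "br x (y + z) = br x y + br x z"
    and bracket_scale_left: "br (scale c x) y = scale c (br x y)"
    and bracket_self: "br x x = 0"
    and jacobi: "br x (br y z) + br y (br z x) + br z (br x y) = 0"
  using lie_algebra by (simp_all add: lie_algebra_def)

lemma bracket_zero_left: "br 0 y = 0"
  using bracket_add_left[of 0 0 y] by simp

lemma bracket_diff_right: "br x (y - z) = br x y - br x z"
  using bracket_add_right[of x "y - z" z] by (simp add: eq_diff_eq)

lemma bracket_antisym: "br x y = - br y x"
proof -
  have "br (x + y) (x + y) = br x x + br x y + (br y x + br y y)"
    by (simp add: bracket_add_left bracket_add_right add.assoc)
  then have "br x y + br y x = 0" by (simp add: bracket_self)
  then show ?thesis by (simp add: eq_neg_iff_add_eq_0)
qed

context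
  fixes I :: "'v set"
  assumes I: "lie_ideal scale br I"
begin

lemma lie_ideal_subspace: "vs.subspace I"
  using I by (simp add: lie_ideal_def)

lemma lie_ideal_0: "0 \<in> I"
  using lie_ideal_subspace vs.subspace_0 by blast

lemma lie_ideal_add: "a \<in> I \<Longrightarrow> b \<in> I \<Longrightarrow> a + b \<in> I"
  using lie_ideal_subspace vs.subspace_add by blast

lemma lie_ideal_neg: "a \<in> I \<Longrightarrow> - a \<in> I"
  using lie_ideal_subspace vs.subspace_neg by blast

lemma lie_ideal_diff: "a \<in> I \<Longrightarrow> b \<in> I \<Longrightarrow> a - b \<in> I"
  using lie_ideal_subspace vs.subspace_diff by blast

lemma lie_ideal_scale: "a \<in> I \<Longrightarrow> scale c a \<in> I"
  using lie_ideal_subspace vs.subspace_scale by blast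

lemma lie_ideal_bracket_right: "a \<in> I \<Longrightarrow> br x a \<in> I"
  using I by (simp add: lie_ideal_def)

lemma lie_ideal_bracket_left: "a \<in> I \<Longrightarrow> br a x \<in> I"
  by (metis bracket_antisym lie_ideal_bracket_right lie_ideal_neg)

end

lemma lie_ideal_Int:
  "lie_ideal scale br I \<Longrightarrow> lie_ideal scale br J \<Longrightarrow> lie_ideal scale br (I \<inter> J)"
  unfolding lie_ideal_def by (auto intro: vs.subspace_inter)

lemma lie_ideal_plus:
  assumes I: "lie_ideal scale br I" and J: "lie_ideal scale br J"
  shows "lie_ideal scale br (I + J)"
  unfolding lie_ideal_def vs.subspace_def
proof (intro conjI allI ballI impI)
  show "0 \<in> I + J"
    using set_plus_intro[OF lie_ideal_0[OF I] lie_ideal_0[OF J]] by simp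
next
  fix x y assume "x \<in> I + J" "y \<in> I + J"
  then obtain a b a' b' where "x = a + b" "y = a' + b'" "a \<in> I" "b \<in> J" "a' \<in> I" "b' \<in> J"
    by (auto elim!: set_plus_elim)
  then have "x + y = (a + a') + (b + b')" "a + a' \<in> I" "b + b' \<in> J"
    by (simp_all add: algebra_simps lie_ideal_add[OF I] lie_ideal_add[OF J])
  then show "x + y \<in> I + J" by auto
next
  fix c x assume "x \<in> I + J"
  then show "scale c x \<in> I + J"
    by (elim set_plus_elim)
      (simp add: vs.scale_right_distrib lie_ideal_scale[OF I] lie_ideal_scale[OF J] set_plus_intro)
next
  fix x y assume "y \<in> I + J"
  then show "br x y \<in> I + J"
    by (elim set_plus_elim)
      (simp add: bracket_add_right lie_ideal_bracket_right[OF I] lie_ideal_bracket_right[OF J]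
        set_plus_intro)
qed

lemma lie_ideal_centraliser:
  assumes A: "lie_ideal scale br A" and B: "lie_ideal scale br B"
  shows "lie_ideal scale br (centraliser br A B)"
proof -
  let ?C = "centraliser br A B"
  have "0 \<in> ?C"
    by (simp add: centraliser_def bracket_zero_left lie_ideal_0[OF B])
  moreover have "x + y \<in> ?C" if "x \<in> ?C" "y \<in> ?C" for x y
    using that by (simp add: centraliser_def bracket_add_left lie_ideal_add[OF B])
  moreover have "scale c x \<in> ?C" if "x \<in> ?C" for c x
    using that by (simp add: centraliser_def bracket_scale_left lie_ideal_scale[OF B])
  moreover have "br y x \<in> ?C" if x: "x \<in> ?C" for x y
    unfolding centraliser_def
  proof (intro CollectI ballI)
    fix a assume a: "a \<in> A"
    \<comment> \<open>Jacobi: both [y,[x,a]] and [x,[a,y]] lie in B, hence so does [a,[y,x]].\<close>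
    have "br a (br y x) = - (br y (br x a) + br x (br a y))"
      using jacobi[of y x a] by (intro eq_neg_iff_add_eq_0[THEN iffD2]) (simp add: ac_simps)
    moreover have "br y (br x a) \<in> B" "br x (br a y) \<in> B"
      using x a lie_ideal_bracket_right[OF B] lie_ideal_bracket_left[OF A]
      by (auto simp: centraliser_def)
    ultimately have "br a (br y x) \<in> B"
      by (metis lie_ideal_neg[OF B] lie_ideal_add[OF B])
    then show "br (br y x) a \<in> B"
      by (metis bracket_antisym lie_ideal_neg[OF B])
  qed
  ultimately show ?thesis
    unfolding lie_ideal_def vs.subspace_def by blast
qed

lemma lie_ideal_subset_centraliser:
  "lie_ideal scale br B \<Longrightarrow> B \<subseteq> centraliser br A B"
  unfolding centraliser_def using lie_ideal_bracket_left by blast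

lemma abelian_factor_iff_subset_centraliser:
  "abelian_factor br A B \<longleftrightarrow> A \<subseteq> centraliser br A B"
  unfolding abelian_factor_def centraliser_def by blast

lemma coset_eq_iff:
  assumes "vs.subspace B"
  shows "coset a B = coset b B \<longleftrightarrow> a - b \<in> B"
proof
  assume "coset a B = coset b B"
  then show "a - b \<in> B"
    using mem_coset[of a a B] vs.subspace_0[OF assms] by (simp add: mem_coset)
next
  assume ab: "a - b \<in> B"
  have "y - a \<in> B \<longleftrightarrow> y - b \<in> B" for y
    using vs.subspace_add[OF assms _ ab, of "y - a"] vs.subspace_diff[OF assms _ ab, of "y - b"]
    by auto
  then show "coset a B = coset b B"
    by (auto simp: mem_coset)
qed

lemma L_isomorphic_centraliser_eq:
  assumes A1: "lie_ideal scale br A1" and B1: "lie_ideal scale br B1"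
    and A2: "lie_ideal scale br A2" and B2: "lie_ideal scale br B2"
    and iso: "L_isomorphic scale br A1 B1 A2 B2"
  shows "centraliser br A1 B1 = centraliser br A2 B2"
proof -
  obtain f where bij: "bij_betw f (quot A1 B1) (quot A2 B2)"
    and add: "\<forall>a\<in>A1. \<forall>b\<in>A1. \<forall>a'\<in>A2. \<forall>b'\<in>A2.
          f (coset a B1) = coset a' B2 \<and> f (coset b B1) = coset b' B2 \<longrightarrow>
          f (coset (a + b) B1) = coset (a' + b') B2"
    and act: "\<forall>x. \<forall>a\<in>A1. \<forall>a'\<in>A2. f (coset a B1) = coset a' B2 \<longrightarrow>
          f (coset (br x a) B1) = coset (br x a') B2"
    using iso unfolding L_isomorphic_def by blast
  have partner: "\<exists>a'\<in>A2. f (coset a B1) = coset a' B2" if "a \<in> A1" for a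
    using bij_betw_apply[OF bij coset_in_quot[OF that]] unfolding quot_def by blast
  have partner': "\<exists>a\<in>A1. f (coset a B1) = coset a' B2" if "a' \<in> A2" for a'
  proof -
    have "coset a' B2 \<in> f ` quot A1 B1"
      using bij coset_in_quot[OF that] by (simp add: bij_betw_def)
    then show ?thesis
      unfolding quot_def by blast
  qed
  note coset_eq_1 = coset_eq_iff[OF lie_ideal_subspace[OF B1]]
    and coset_eq_2 = coset_eq_iff[OF lie_ideal_subspace[OF B2]]
  \<comment> \<open>Additivity forces f (0 + B1) = 0 + B2, since z + B2 = (z + z) + B2 gives z \<in> B2.\<close>
  have f_zero: "f (coset 0 B1) = coset 0 B2"
  proof -
    obtain z where z: "z \<in> A2" "f (coset 0 B1) = coset z B2"
      using partner[OF lie_ideal_0[OF A1]] by blast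
    then have "coset z B2 = coset (z + z) B2"
      using add lie_ideal_0[OF A1] by fastforce
    then have "z \<in> B2"
      using coset_eq_2 lie_ideal_neg[OF B2] by fastforce
    with z show ?thesis
      by (simp add: coset_eq_2)
  qed
  have kills_iff: "br x a \<in> B1 \<longleftrightarrow> br x a' \<in> B2"
    if a: "a \<in> A1" and a': "a' \<in> A2" and aa': "f (coset a B1) = coset a' B2" for x a a'
  proof -
    have "br x a \<in> B1 \<longleftrightarrow> coset (br x a) B1 = coset 0 B1"
      by (simp add: coset_eq_1)
    also have "\<dots> \<longleftrightarrow> f (coset (br x a) B1) = f (coset 0 B1)"
      using bij_betw_imp_inj_on[OF bij] coset_in_quot lie_ideal_bracket_right[OF A1 a]
        lie_ideal_0[OF A1] by (metis inj_on_eq_iff)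
    also have "\<dots> \<longleftrightarrow> coset (br x a') B2 = coset 0 B2"
      using act a a' aa' f_zero by simp
    also have "\<dots> \<longleftrightarrow> br x a' \<in> B2"
      by (simp add: coset_eq_2)
    finally show ?thesis .
  qed
  show ?thesis
    unfolding centraliser_def using partner partner' kills_iff by blast
qed

lemma chief_factorD:
  assumes "chief_factor scale br A B"
  shows "lie_ideal scale br A" "lie_ideal scale br B" "B \<subseteq> A"
  using assms unfolding chief_factor_def by auto

lemma chief_factor_between:
  assumes "chief_factor scale br A B" "lie_ideal scale br I" "B \<subseteq> I" "I \<subseteq> A"
  shows "I = B \<or> I = A"
  using assms unfolding chief_factor_def by blast

lemma chief_factor_Int_centraliser:
  assumes AB: "chief_factor scale br A B" and nonab: "\<not> abelian_factor br A B"
  shows "A \<inter> centraliser br A B = B"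
proof -
  note A = chief_factorD(1)[OF AB] and B = chief_factorD(2)[OF AB]
  have "lie_ideal scale br (A \<inter> centraliser br A B)"
    by (intro lie_ideal_Int lie_ideal_centraliser A B)
  moreover have "B \<subseteq> A \<inter> centraliser br A B"
    using chief_factorD(3)[OF AB] lie_ideal_subset_centraliser[OF B] by blast
  moreover have "A \<inter> centraliser br A B \<noteq> A"
    using nonab abelian_factor_iff_subset_centraliser by blast
  ultimately show ?thesis
    using chief_factor_between[OF AB] by blast
qed

lemma chief_factor_subset_plus_centraliser:
  assumes AB: "chief_factor scale br A B" and J: "lie_ideal scale br J"
    and J_not_centralising: "\<not> J \<subseteq> centraliser br A B"
  shows "A \<subseteq> J + centraliser br A B"
proof -
  note A = chief_factorD(1)[OF AB] and B = chief_factorD(2)[OF AB]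
  let ?C = "centraliser br A B"
  have C: "lie_ideal scale br ?C"
    by (rule lie_ideal_centraliser[OF A B])
  have J_sub: "J \<subseteq> J + ?C" and C_sub: "?C \<subseteq> J + ?C"
    using set_plus_intro[OF _ lie_ideal_0[OF C], of _ J] set_plus_intro[OF lie_ideal_0[OF J], of _ ?C]
    by auto
  have "lie_ideal scale br (A \<inter> (J + ?C))"
    by (intro lie_ideal_Int lie_ideal_plus A J C)
  moreover have "B \<subseteq> A \<inter> (J + ?C)"
    using chief_factorD(3)[OF AB] lie_ideal_subset_centraliser[OF B] C_sub by blast
  moreover have "A \<inter> (J + ?C) \<noteq> B"
  proof
    assume "A \<inter> (J + ?C) = B"
    then have "br x a \<in> B" if "x \<in> J" "a \<in> A" for x a
      using that J_sub lie_ideal_bracket_right[OF A] lie_ideal_bracket_left[OF J] by blast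
    then have "J \<subseteq> ?C"
      unfolding centraliser_def by blast
    with J_not_centralising show False ..
  qed
  ultimately show ?thesis
    using chief_factor_between[OF AB] by blast
qed

end

text \<open>Both A1/B1 and A2/B2 are perspective to (A1 + C)/C = (A2 + C)/C.\<close>
locale perspective_factors = lie_alg +
  fixes A1 B1 A2 B2 C
  assumes A1: "lie_ideal scale br A1" and A2: "lie_ideal scale br A2"
    and C: "lie_ideal scale br C"
    and Int1: "A1 \<inter> C = B1" and Int2: "A2 \<inter> C = B2"
    and cover1: "A1 \<subseteq> A2 + C" and cover2: "A2 \<subseteq> A1 + C"
begin

definition transfer where
  "transfer X = A2 \<inter> (X + C)"

lemma lie_ideal_B2: "lie_ideal scale br B2"
  using lie_ideal_Int[OF A2 C] Int2 by simp

lemma partner1: "a \<in> A1 \<Longrightarrow> \<exists>a'\<in>A2. a - a' \<in> C"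
  using cover1 by (force elim!: set_plus_elim)

lemma partner2: "a' \<in> A2 \<Longrightarrow> \<exists>a\<in>A1. a - a' \<in> C"
  using cover2 by (force elim!: set_plus_elim intro: lie_ideal_neg[OF C])

lemma transfer_coset:
  assumes a: "a \<in> A1" and a': "a' \<in> A2" and aa': "a - a' \<in> C"
  shows "transfer (coset a B1) = coset a' B2"
proof (rule set_eqI)
  fix y
  have "y \<in> coset a B1 + C \<longleftrightarrow> y - a \<in> C"
  proof
    assume "y \<in> coset a B1 + C"
    then obtain z c where "y = z + c" "z - a \<in> B1" "c \<in> C"
      by (auto simp: mem_coset elim!: set_plus_elim)
    then show "y - a \<in> C"
      using Int1 lie_ideal_add[OF C, of "z - a" c] by (auto simp: algebra_simps)
  next
    assume "y - a \<in> C"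
    moreover have "0 \<in> B1"
      using Int1 lie_ideal_0[OF A1] lie_ideal_0[OF C] by blast
    then have "a \<in> coset a B1"
      by (simp add: mem_coset)
    ultimately show "y \<in> coset a B1 + C"
      using set_plus_intro[of a "coset a B1" "y - a" C] by simp
  qed
  moreover have "y - a \<in> C \<longleftrightarrow> y - a' \<in> C"
    using lie_ideal_add[OF C, of "y - a" "a - a'"] lie_ideal_diff[OF C, of "y - a'" "a - a'"] aa'
    by auto
  moreover have "y \<in> A2 \<longleftrightarrow> y - a' \<in> A2"
    using lie_ideal_add[OF A2, of "y - a'" a'] lie_ideal_diff[OF A2, of y a'] a' by auto
  ultimately show "y \<in> transfer (coset a B1) \<longleftrightarrow> y \<in> coset a' B2"
    using Int2 by (auto simp: transfer_def mem_coset)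
qed

lemma transfer_coset_iff:
  assumes a: "a \<in> A1" and a': "a' \<in> A2"
  shows "transfer (coset a B1) = coset a' B2 \<longleftrightarrow> a - a' \<in> C"
proof -
  obtain a'' where a'': "a'' \<in> A2" "a - a'' \<in> C"
    using partner1[OF a] by blast
  have "transfer (coset a B1) = coset a' B2 \<longleftrightarrow> a'' - a' \<in> B2"
    using transfer_coset[OF a a''] coset_eq_iff[OF lie_ideal_subspace[OF lie_ideal_B2]] by simp
  also have "\<dots> \<longleftrightarrow> a'' - a' \<in> C"
    using Int2 lie_ideal_diff[OF A2 a''(1) a'] by blast
  also have "\<dots> \<longleftrightarrow> a - a' \<in> C"
    using lie_ideal_add[OF C, of "a - a''" "a'' - a'"] lie_ideal_diff[OF C, of "a - a'" "a - a''"]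
      a''(2)
    by auto
  finally show ?thesis .
qed

lemma bij_betw_transfer: "bij_betw transfer (quot A1 B1) (quot A2 B2)"
  unfolding bij_betw_def
proof
  show "inj_on transfer (quot A1 B1)"
  proof (rule inj_onI)
    fix X Y assume "X \<in> quot A1 B1" "Y \<in> quot A1 B1" and XY: "transfer X = transfer Y"
    then obtain a b where X: "X = coset a B1" "a \<in> A1" and Y: "Y = coset b B1" "b \<in> A1"
      unfolding quot_def by blast
    obtain b' where b': "b' \<in> A2" "b - b' \<in> C"
      using partner1[OF Y(2)] by blast
    have "a - b' \<in> C"
      using XY transfer_coset[OF Y(2) b'] transfer_coset_iff[OF X(2) b'(1)] X Y by simp
    then have "a - b \<in> A1 \<inter> C"
      using lie_ideal_diff[OF C \<open>a - b' \<in> C\<close> b'(2)] lie_ideal_diff[OF A1 X(2) Y(2)] by simp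
    then show "X = Y"
      using X Y Int1 coset_eq_iff[OF lie_ideal_subspace[OF lie_ideal_Int[OF A1 C]]] by simp
  qed
  show "transfer ` quot A1 B1 = quot A2 B2"
  proof (intro equalityI subsetI)
    fix Y assume "Y \<in> transfer ` quot A1 B1"
    then obtain a where "a \<in> A1" "Y = transfer (coset a B1)"
      unfolding quot_def by blast
    then show "Y \<in> quot A2 B2"
      using partner1 transfer_coset coset_in_quot by metis
  next
    fix Y assume "Y \<in> quot A2 B2"
    then obtain a' where "a' \<in> A2" "Y = coset a' B2"
      unfolding quot_def by blast
    then show "Y \<in> transfer ` quot A1 B1"
      using partner2 transfer_coset coset_in_quot by (metis image_eqI)
  qed
qed

lemma L_isomorphic_factors: "L_isomorphic scale br A1 B1 A2 B2"
  unfolding L_isomorphic_def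
proof (intro exI conjI ballI allI impI)
  show "bij_betw transfer (quot A1 B1) (quot A2 B2)"
    by (rule bij_betw_transfer)
next
  fix a b a' b' assume "a \<in> A1" "b \<in> A1" "a' \<in> A2" "b' \<in> A2"
    and "transfer (coset a B1) = coset a' B2 \<and> transfer (coset b B1) = coset b' B2"
  then have "(a - a') + (b - b') \<in> C"
    by (simp add: transfer_coset_iff lie_ideal_add[OF C])
  then have "(a + b) - (a' + b') \<in> C"
    by (simp add: algebra_simps)
  then show "transfer (coset (a + b) B1) = coset (a' + b') B2"
    by (simp add: transfer_coset_iff \<open>a \<in> A1\<close> \<open>b \<in> A1\<close> \<open>a' \<in> A2\<close> \<open>b' \<in> A2\<close>
        lie_ideal_add[OF A1] lie_ideal_add[OF A2])
next
  fix c a a' assume "a \<in> A1" "a' \<in> A2" "transfer (coset a B1) = coset a' B2"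
  moreover have "scale c a - scale c a' = scale c (a - a')"
    by (simp add: vs.scale_right_diff_distrib)
  ultimately show "transfer (coset (scale c a) B1) = coset (scale c a') B2"
    by (simp add: transfer_coset_iff lie_ideal_scale[OF A1] lie_ideal_scale[OF A2]
        lie_ideal_scale[OF C])
next
  fix x a a' assume "a \<in> A1" "a' \<in> A2" "transfer (coset a B1) = coset a' B2"
  moreover have "br x a - br x a' = br x (a - a')"
    by (simp add: bracket_diff_right)
  ultimately show "transfer (coset (br x a) B1) = coset (br x a') B2"
    by (simp add: transfer_coset_iff lie_ideal_bracket_right[OF A1] lie_ideal_bracket_right[OF A2]
        lie_ideal_bracket_right[OF C])
qed

end

context lie_alg
begin

lemma L_isomorphic_if_centraliser_eq:
  assumes chief1: "chief_factor scale br A1 B1" and chief2: "chief_factor scale br A2 B2"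
    and nonab1: "\<not> abelian_factor br A1 B1" and nonab2: "\<not> abelian_factor br A2 B2"
    and eq: "centraliser br A1 B1 = centraliser br A2 B2"
  shows "L_isomorphic scale br A1 B1 A2 B2"
proof -
  let ?C = "centraliser br A1 B1"
  have "\<not> A1 \<subseteq> ?C" "\<not> A2 \<subseteq> ?C"
    using nonab1 nonab2 eq by (simp_all add: abelian_factor_iff_subset_centraliser)
  then interpret perspective_factors scale br A1 B1 A2 B2 ?C
    using chief_factorD[OF chief1] chief_factorD[OF chief2] eq
      chief_factor_Int_centraliser[OF chief1 nonab1] chief_factor_Int_centraliser[OF chief2 nonab2]
      chief_factor_subset_plus_centraliser[OF chief1, of A2]
      chief_factor_subset_plus_centraliser[OF chief2, of A1]
      lie_ideal_centraliser
    by unfold_locales simp_all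
  show ?thesis
    by (rule L_isomorphic_factors)
qed

end

theorem theorem2p1:
  fixes scale :: "'k::field \<Rightarrow> 'v::ab_group_add \<Rightarrow> 'v"
    and br :: "'v \<Rightarrow> 'v \<Rightarrow> 'v"
    and A1 B1 A2 B2 :: "'v set"
  assumes "lie_algebra scale br"
    and "finite_dimensional scale"
    and "chief_factor scale br A1 B1"
    and "chief_factor scale br A2 B2"
  shows "(L_isomorphic scale br A1 B1 A2 B2 \<longrightarrow>
            centraliser br A1 B1 = centraliser br A2 B2)
       \<and> (\<not> abelian_factor br A1 B1 \<and> \<not> abelian_factor br A2 B2 \<longrightarrow>
            (L_isomorphic scale br A1 B1 A2 B2 \<longleftrightarrow>
             centraliser br A1 B1 = centraliser br A2 B2))"
proof -
  interpret lie_alg scale br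
    by (rule lie_alg.intro) (fact assms(1))
  have "L_isomorphic scale br A1 B1 A2 B2 \<Longrightarrow> centraliser br A1 B1 = centraliser br A2 B2"
    using L_isomorphic_centraliser_eq chief_factorD[OF assms(3)] chief_factorD[OF assms(4)] by blast
  then show ?thesis
    using L_isomorphic_if_centraliser_eq[OF assms(3,4)] by blast
qed

end
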